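(* Let $(V,E)$ be a finite graph and $p\in[0,1]$. Let $(\eta_t,\sigma_t)_{t\ge0}$ be a continuous-time Markov jump process on $\{0,1\}^E\times\{-1,1\}^V$ with the following rates: (i) if $\eta'=\eta$ and there is $x\in V$ with $\sigma'=\sigma^x$ and $\eta(e)=0$ for all $e\in E_x$, the rate from $(\eta,\sigma)$ to $(\eta',\sigma')$ is $1$; (ii) if $\sigma'=\sigma$ and there is $e\in E$ with $\eta'=\eta^e$, the rate is $p\mathbf 1_{\eta(e)=0}\delta_\sigma(e)+(1-p)\mathbf 1_{\eta(e)=1}$; (iii) all other off-diagonal rates are $0$. Suppose $(\eta_0,\sigma_0)$ is distributed according to $IP$. Then for every $e\in E$, every $\eta\in\{0,1\}^E$ and every $s\ge0$, $$\lim_{t\to0}\frac1t\,\mathbb P(\eta_{t+s}=\eta^e\mid\eta_s=\eta)=(1-p)\mathbf 1_{\eta(e)=1}+p\,\mathbf 1_{\eta(e)=0,\ \gamma_\eta(e)=1}+\frac p2\,\mathbf 1_{\eta(e)=0,\ \gamma_\eta(e)=0}.$$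
   Context: Edge configurations $\eta\in\{0,1\}^E$ (1 = open), spin configurations $\sigma\in\{-1,1\}^V$. For $e=\langle x,y\rangle$, $\delta_\sigma(e)=\mathbf 1_{\sigma(x)=\sigma(y)}$. $IP(\eta,\sigma)=\frac1Z\prod_{e\in E}\big(p\mathbf 1_{\eta(e)=1}\delta_\sigma(e)+(1-p)\mathbf 1_{\eta(e)=0}\big)$ with $Z$ the normalizing constant. $E_x$ is the set of edges with endvertex $x$; $\sigma^x$ is $\sigma$ with the spin at $x$ flipped; $\eta^e$ is $\eta$ with the value at edge $e$ changed. For $e=\langle x,y\rangle$, $\gamma_\eta(e)=1$ if $x$ and $y$ are connected by a path of open edges of $\eta$ not using $e$, and $\gamma_\eta(e)=0$ otherwise. *)

theory Defs
  imports "HOL-Analysis.Analysis"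
begin

text \<open>
  Finite simple graph: vertex set = the finite type 'v, edge set E a set of
  two-element subsets of vertices.  Edge configurations eta :: 'v set \<Rightarrow> bool
  (True = open = 1), required to be False outside E; spin configurations
  sigma :: 'v \<Rightarrow> int with values in {-1,1}.
\<close>

type_synonym 'v state = "('v set \<Rightarrow> bool) \<times> ('v \<Rightarrow> int)"

definition simple_graph :: "'v set set \<Rightarrow> bool" where
  "simple_graph E \<longleftrightarrow> (\<forall>e\<in>E. \<exists>x y. x \<noteq> y \<and> e = {x, y})"

definition edge_configs :: "'v set set \<Rightarrow> ('v set \<Rightarrow> bool) set" where
  "edge_configs E = {\<eta>. \<forall>e. e \<notin> E \<longrightarrow> \<not> \<eta> e}"

definition spin_configs :: "('v \<Rightarrow> int) set" where
  "spin_configs = {\<sigma>. \<forall>x. \<sigma> x \<in> {-1, 1}}"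

definition states :: "'v set set \<Rightarrow> 'v state set" where
  "states E = edge_configs E \<times> spin_configs"

definition delta :: "('v \<Rightarrow> int) \<Rightarrow> 'v set \<Rightarrow> bool" where
  "delta \<sigma> e \<longleftrightarrow> (\<forall>x\<in>e. \<forall>y\<in>e. \<sigma> x = \<sigma> y)"

definition flip_spin :: "('v \<Rightarrow> int) \<Rightarrow> 'v \<Rightarrow> ('v \<Rightarrow> int)" where
  "flip_spin \<sigma> x = \<sigma>(x := - \<sigma> x)"

definition flip_edge :: "('v set \<Rightarrow> bool) \<Rightarrow> 'v set \<Rightarrow> ('v set \<Rightarrow> bool)" where
  "flip_edge \<eta> e = \<eta>(e := \<not> \<eta> e)"

text \<open>Off-diagonal jump rates (i)-(iii).  For a \<noteq> b at most one summand is nonzero.\<close>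
definition rate :: "'v::finite set set \<Rightarrow> real \<Rightarrow> 'v state \<Rightarrow> 'v state \<Rightarrow> real" where
  "rate E p a b =
     (if a = b then 0 else
       (\<Sum>x\<in>UNIV. if fst b = fst a \<and> snd b = flip_spin (snd a) x
                       \<and> (\<forall>e\<in>E. x \<in> e \<longrightarrow> \<not> fst a e) then 1 else 0)
     + (\<Sum>e\<in>E. if snd b = snd a \<and> fst b = flip_edge (fst a) e
                 then p * (if \<not> fst a e \<and> delta (snd a) e then 1 else 0)
                      + (1 - p) * (if fst a e then 1 else 0)
                 else 0))"

definition generator :: "'v::finite set set \<Rightarrow> real \<Rightarrow> 'v state \<Rightarrow> 'v state \<Rightarrow> real" where
  "generator E p a b =
     (if a = b then - (\<Sum>c\<in>states E - {a}. rate E p a c) else rate E p a b)"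

fun gen_pow :: "'v::finite set set \<Rightarrow> real \<Rightarrow> nat \<Rightarrow> 'v state \<Rightarrow> 'v state \<Rightarrow> real" where
  "gen_pow E p 0 a b = (if a = b then 1 else 0)"
| "gen_pow E p (Suc n) a b = (\<Sum>c\<in>states E. generator E p a c * gen_pow E p n c b)"

definition trans :: "'v::finite set set \<Rightarrow> real \<Rightarrow> real \<Rightarrow> 'v state \<Rightarrow> 'v state \<Rightarrow> real" where
  "trans E p t a b = (\<Sum>n. t ^ n / fact n * gen_pow E p n a b)"

definition IP_weight :: "'v set set \<Rightarrow> real \<Rightarrow> 'v state \<Rightarrow> real" where
  "IP_weight E p a =
     (\<Prod>e\<in>E. p * (if fst a e \<and> delta (snd a) e then 1 else 0)
              + (1 - p) * (if \<not> fst a e then 1 else 0))"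

definition IP :: "'v::finite set set \<Rightarrow> real \<Rightarrow> 'v state \<Rightarrow> real" where
  "IP E p a = IP_weight E p a / (\<Sum>c\<in>states E. IP_weight E p c)"

text \<open>P(eta_s = eta and eta_{s+t} = eta') for the process started from IP.\<close>
definition joint_edge_prob ::
  "'v::finite set set \<Rightarrow> real \<Rightarrow> real \<Rightarrow> real \<Rightarrow> ('v set \<Rightarrow> bool) \<Rightarrow> ('v set \<Rightarrow> bool) \<Rightarrow> real" where
  "joint_edge_prob E p s t \<eta> \<eta>' =
     (\<Sum>a\<in>{a\<in>states E. fst a = \<eta>}. \<Sum>b\<in>{b\<in>states E. fst b = \<eta>'}.
        (\<Sum>c\<in>states E. IP E p c * trans E p s c a) * trans E p t a b)"

text \<open>P(eta_s = eta) for the process started from IP.\<close>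
definition edge_prob :: "'v::finite set set \<Rightarrow> real \<Rightarrow> real \<Rightarrow> ('v set \<Rightarrow> bool) \<Rightarrow> real" where
  "edge_prob E p s \<eta> =
     (\<Sum>a\<in>{a\<in>states E. fst a = \<eta>}. \<Sum>c\<in>states E. IP E p c * trans E p s c a)"

definition open_step :: "'v set set \<Rightarrow> ('v set \<Rightarrow> bool) \<Rightarrow> 'v set \<Rightarrow> 'v \<Rightarrow> 'v \<Rightarrow> bool" where
  "open_step E \<eta> e u w \<longleftrightarrow> (\<exists>f\<in>E. f \<noteq> e \<and> \<eta> f \<and> f = {u, w})"

definition gamma :: "'v set set \<Rightarrow> ('v set \<Rightarrow> bool) \<Rightarrow> 'v set \<Rightarrow> bool" where
  "gamma E \<eta> e \<longleftrightarrow> (\<exists>x y. e = {x, y} \<and> x \<noteq> y \<and> (open_step E \<eta> e)\<^sup>*\<^sup>* x y)"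

end

(*
  The rates satisfy detailed balance with respect to IP: a spin flip is only
  allowed at a vertex all of whose edges are closed, and then does not change the weight,
  while opening an edge e multiplies the weight by p/(1-p) and is possible at rate p only
  if delta_sigma(e) = 1.  Hence IP is stationary, the state at time s is IP-distributed, and
  the short-time rate of the jump eta -> eta^e is the IP-average, conditionally on eta, of
  p 1_{eta(e)=0} delta_sigma(e) + (1-p) 1_{eta(e)=1}.  Given eta, every open edge joins equal
  spins under IP, so delta_sigma(e) = 1 almost surely when gamma_eta(e) = 1.  Otherwise
  flipping all spins of the open cluster of one endpoint of e preserves the weight and
  toggles delta_sigma(e), so that delta_sigma(e) has conditional mean 1/2.
*)
theory Submission
  imports Defs
begin

section \<open>Exponentials of finite generator matrices\<close>

fun mat_pow :: "'s set \<Rightarrow> ('s \<Rightarrow> 's \<Rightarrow> real) \<Rightarrow> nat \<Rightarrow> 's \<Rightarrow> 's \<Rightarrow> real" where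
  "mat_pow S Q 0 a b = (if a = b then 1 else 0)"
| "mat_pow S Q (Suc n) a b = (\<Sum>c\<in>S. Q a c * mat_pow S Q n c b)"

definition mat_exp :: "'s set \<Rightarrow> ('s \<Rightarrow> 's \<Rightarrow> real) \<Rightarrow> real \<Rightarrow> 's \<Rightarrow> 's \<Rightarrow> real" where
  "mat_exp S Q t a b = (\<Sum>n. t ^ n / fact n * mat_pow S Q n a b)"

lemma abs_mat_pow_le:
  assumes "finite S" and "a \<in> S"
  shows "\<bar>mat_pow S Q n a b\<bar> \<le> (\<Sum>a\<in>S. \<Sum>c\<in>S. \<bar>Q a c\<bar>) ^ n"
  using \<open>a \<in> S\<close>
proof (induction n arbitrary: a)
  case (Suc n)
  let ?M = "\<Sum>a\<in>S. \<Sum>c\<in>S. \<bar>Q a c\<bar>"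
  have "\<bar>mat_pow S Q (Suc n) a b\<bar> \<le> (\<Sum>c\<in>S. \<bar>Q a c\<bar> * \<bar>mat_pow S Q n c b\<bar>)"
    by (simp add: sum_abs[THEN order_trans] abs_mult)
  also have "\<dots> \<le> (\<Sum>c\<in>S. \<bar>Q a c\<bar>) * ?M ^ n"
    by (simp add: sum_distrib_right sum_mono mult_left_mono Suc.IH)
  also have "\<dots> \<le> ?M * ?M ^ n"
    using assms(1) Suc.prems
    by (intro mult_right_mono member_le_sum zero_le_power) (auto intro: sum_nonneg)
  finally show ?case by simp
qed simp

lemma summable_mat_exp_series:
  assumes "finite S" and "a \<in> S"
  shows "summable (\<lambda>n. t ^ n / fact n * mat_pow S Q n a b)"
proof (rule summable_comparison_test)
  let ?M = "\<Sum>a\<in>S. \<Sum>c\<in>S. \<bar>Q a c\<bar>"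
  show "summable (\<lambda>n. (\<bar>t\<bar> * ?M) ^ n / fact n)"
    using summable_exp[of "\<bar>t\<bar> * ?M"] by (simp add: field_simps)
  show "\<exists>N. \<forall>n\<ge>N. norm (t ^ n / fact n * mat_pow S Q n a b) \<le> (\<bar>t\<bar> * ?M) ^ n / fact n"
    using abs_mat_pow_le[OF assms]
    by (auto simp: abs_mult power_abs power_mult_distrib divide_simps intro!: mult_left_mono)
qed

lemma mat_exp_stationary:
  assumes "finite S" and "d \<in> S"
    and balance: "\<And>d. d \<in> S \<Longrightarrow> (\<Sum>c\<in>S. \<pi> c * Q c d) = 0"
  shows "(\<Sum>c\<in>S. \<pi> c * mat_exp S Q t c d) = \<pi> d"
proof -
  have vanish: "(\<Sum>c\<in>S. \<pi> c * mat_pow S Q (Suc n) c d) = 0" for n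
  proof -
    have "(\<Sum>c\<in>S. \<pi> c * mat_pow S Q (Suc n) c d) = (\<Sum>c\<in>S. \<Sum>c'\<in>S. \<pi> c * Q c c' * mat_pow S Q n c' d)"
      by (simp add: sum_distrib_left mult.assoc)
    also have "\<dots> = (\<Sum>c'\<in>S. \<Sum>c\<in>S. \<pi> c * Q c c' * mat_pow S Q n c' d)"
      by (rule sum.swap)
    also have "\<dots> = (\<Sum>c'\<in>S. (\<Sum>c\<in>S. \<pi> c * Q c c') * mat_pow S Q n c' d)"
      by (simp add: sum_distrib_right)
    finally show ?thesis
      by (simp add: balance)
  qed
  have terms: "(\<Sum>c\<in>S. \<pi> c * (t ^ n / fact n * mat_pow S Q n c d))
      = (if n = 0 then \<pi> d else 0)" for n
  proof (cases n)
    case 0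
    then show ?thesis using assms(1,2) by (simp add: if_distrib cong: if_cong)
  next
    case (Suc m)
    have "(\<Sum>c\<in>S. \<pi> c * (t ^ n / fact n * mat_pow S Q n c d))
        = t ^ n / fact n * (\<Sum>c\<in>S. \<pi> c * mat_pow S Q n c d)"
      by (simp add: sum_distrib_left mult.left_commute)
    also have "\<dots> = 0"
      unfolding Suc vanish by simp
    finally show ?thesis
      using Suc by simp
  qed
  have "(\<Sum>c\<in>S. \<pi> c * mat_exp S Q t c d) = (\<Sum>c\<in>S. \<Sum>n. \<pi> c * (t ^ n / fact n * mat_pow S Q n c d))"
    unfolding mat_exp_def by (intro sum.cong refl suminf_mult[symmetric] summable_mat_exp_series[OF assms(1)])
  also have "\<dots> = (\<Sum>n. \<Sum>c\<in>S. \<pi> c * (t ^ n / fact n * mat_pow S Q n c d))"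
    by (intro suminf_sum[symmetric] summable_mult summable_mat_exp_series[OF assms(1)])
  also have "\<dots> = \<pi> d"
    unfolding terms by (rule sums_unique[symmetric]) (rule sums_single)
  finally show ?thesis .
qed

lemma mat_exp_off_diagonal_rate:
  assumes "finite S" and "a \<in> S" and "b \<in> S" and "a \<noteq> b"
  shows "((\<lambda>t. mat_exp S Q t a b / t) \<longlongrightarrow> Q a b) (at_right 0)"
proof -
  define c where "c n = mat_pow S Q n a b / fact n" for n
  have series: "(\<lambda>t. mat_exp S Q t a b) = (\<lambda>t. \<Sum>n. c n * t ^ n)"
    by (simp add: mat_exp_def c_def mult.commute)
  have "((\<lambda>t. mat_exp S Q t a b) has_field_derivative (\<Sum>n. diffs c n * 0 ^ n)) (at 0)"
    unfolding series using summable_mat_exp_series[OF assms(1,2)]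
    by (intro termdiffs_strong_converges_everywhere) (simp add: c_def mult.commute)
  moreover have "(\<Sum>n. diffs c n * 0 ^ n) = Q a b"
    using assms by (simp only: powser_zero) (simp add: diffs_def c_def if_distrib cong: if_cong)
  moreover have "mat_exp S Q 0 a b = 0"
    using fun_cong[OF series, of 0] assms(4) by (simp only: powser_zero) (simp add: c_def)
  ultimately have "((\<lambda>t. mat_exp S Q t a b / t) \<longlongrightarrow> Q a b) (at 0)"
    by (simp add: has_field_derivative_iff)
  then show ?thesis
    by (rule tendsto_mono[rotated]) (simp add: at_le)
qed

lemma balance_if_detailed_balance:
  fixes \<pi> :: "'s \<Rightarrow> real" and R :: "'s \<Rightarrow> 's \<Rightarrow> real"
  assumes "finite S" and "d \<in> S"
    and detailed: "\<And>a b. a \<in> S \<Longrightarrow> b \<in> S \<Longrightarrow> \<pi> a * R a b = \<pi> b * R b a"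
  shows "(\<Sum>c\<in>S. \<pi> c * (if c = d then - (\<Sum>c'\<in>S - {c}. R c c') else R c d)) = 0"
proof -
  have "(\<Sum>c\<in>S - {d}. \<pi> c * R c d) = (\<Sum>c\<in>S - {d}. \<pi> d * R d c)"
    using assms(2) by (intro sum.cong refl) (simp add: detailed)
  also have "\<dots> = \<pi> d * (\<Sum>c\<in>S - {d}. R d c)"
    by (simp add: sum_distrib_left)
  finally show ?thesis
    using assms(1,2) by (simp add: sum.remove[of S d])
qed

section \<open>Flips and jump rates\<close>

lemma finite_spin_configs: "finite (spin_configs :: ('v::finite \<Rightarrow> int) set)"
proof -
  have "spin_configs = (UNIV :: 'v set) \<rightarrow>\<^sub>E {-1, 1 :: int}"
    by (auto simp: spin_configs_def PiE_UNIV_domain)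
  moreover have "finite ((UNIV :: 'v set) \<rightarrow>\<^sub>E {-1, 1 :: int})"
    by (rule finite_PiE) simp_all
  ultimately show ?thesis by simp
qed

lemma finite_states: "finite (states (E :: 'v::finite set set))"
  by (simp add: states_def finite_spin_configs)

lemma gen_pow_eq_mat_pow: "gen_pow E p n a b = mat_pow (states E) (generator E p) n a b"
  by (induction n arbitrary: a) simp_all

lemma trans_eq_mat_exp: "trans E p = mat_exp (states E) (generator E p)"
  by (simp add: fun_eq_iff trans_def mat_exp_def gen_pow_eq_mat_pow)

definition flip_spins :: "('v \<Rightarrow> int) \<Rightarrow> 'v set \<Rightarrow> ('v \<Rightarrow> int)" where
  "flip_spins \<sigma> C = (\<lambda>v. if v \<in> C then - \<sigma> v else \<sigma> v)"

lemma flip_spin_eq_flip_spins: "flip_spin \<sigma> x = flip_spins \<sigma> {x}"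
  by (auto simp: flip_spin_def flip_spins_def)

lemma flip_spins_flip_spins [simp]: "flip_spins (flip_spins \<sigma> C) C = \<sigma>"
  by (simp add: flip_spins_def fun_eq_iff)

lemma flip_spin_flip_spin [simp]: "flip_spin (flip_spin \<sigma> x) x = \<sigma>"
  by (simp add: flip_spin_eq_flip_spins)

lemma flip_spins_in_spin_configs: "\<sigma> \<in> spin_configs \<Longrightarrow> flip_spins \<sigma> C \<in> spin_configs"
  by (auto simp: flip_spins_def spin_configs_def)

lemma flip_spin_eq_iff:
  assumes "\<sigma> \<in> spin_configs"
  shows "flip_spin \<sigma> y = flip_spin \<sigma> x \<longleftrightarrow> y = x"
proof
  assume "flip_spin \<sigma> y = flip_spin \<sigma> x"
  then have "flip_spin \<sigma> y y = flip_spin \<sigma> x y" by simp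
  moreover have "\<sigma> y \<in> {-1, 1}" using assms by (simp add: spin_configs_def)
  ultimately show "y = x" by (auto simp: flip_spin_def split: if_splits)
qed simp

lemma flip_spin_neq: "\<sigma> \<in> spin_configs \<Longrightarrow> flip_spin \<sigma> x \<noteq> \<sigma>"
  by (auto simp: flip_spin_def spin_configs_def fun_eq_iff dest: spec[of _ x])

lemma flip_edge_eq_iff: "flip_edge \<eta> e = flip_edge \<eta> f \<longleftrightarrow> e = f"
  by (auto simp: flip_edge_def fun_eq_iff)

lemma flip_edge_neq: "flip_edge \<eta> e \<noteq> \<eta>"
  by (auto simp: flip_edge_def fun_eq_iff)

lemma flip_edge_flip_edge [simp]: "flip_edge (flip_edge \<eta> e) e = \<eta>"
  by (simp add: flip_edge_def)

lemma flip_edge_in_edge_configs: "\<eta> \<in> edge_configs E \<Longrightarrow> e \<in> E \<Longrightarrow> flip_edge \<eta> e \<in> edge_configs E"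
  by (auto simp: flip_edge_def edge_configs_def)

lemma delta_pair: "delta \<sigma> {x, y} \<longleftrightarrow> \<sigma> x = \<sigma> y"
  by (auto simp: delta_def)

lemma delta_flip_spins: "f \<subseteq> C \<or> f \<inter> C = {} \<Longrightarrow> delta (flip_spins \<sigma> C) f = delta \<sigma> f"
  by (auto simp: delta_def flip_spins_def)

lemma delta_flip_spins_across:
  assumes "\<sigma> \<in> spin_configs" and "x \<in> C" and "y \<notin> C"
  shows "delta (flip_spins \<sigma> C) {x, y} \<longleftrightarrow> \<not> delta \<sigma> {x, y}"
proof -
  have "\<sigma> x \<in> {-1, 1}" and "\<sigma> y \<in> {-1, 1}" using assms(1) by (auto simp: spin_configs_def)
  then show ?thesis using assms(2,3) by (auto simp: delta_pair flip_spins_def)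
qed

definition edge_rate :: "real \<Rightarrow> ('v set \<Rightarrow> bool) \<Rightarrow> ('v \<Rightarrow> int) \<Rightarrow> 'v set \<Rightarrow> real" where
  "edge_rate p \<eta> \<sigma> f = p * (if \<not> \<eta> f \<and> delta \<sigma> f then 1 else 0) + (1 - p) * (if \<eta> f then 1 else 0)"

lemma rate_flip_spin:
  assumes "\<sigma> \<in> spin_configs"
  shows "rate E p (\<eta>, \<sigma>) (\<eta>, flip_spin \<sigma> x) = (if \<forall>f\<in>E. x \<in> f \<longrightarrow> \<not> \<eta> f then 1 else 0)"
proof -
  have "(\<Sum>y\<in>UNIV. if flip_spin \<sigma> x = flip_spin \<sigma> y \<and> (\<forall>f\<in>E. y \<in> f \<longrightarrow> \<not> \<eta> f) then 1 else 0)
      = (\<Sum>y\<in>UNIV. if x = y then (if \<forall>f\<in>E. x \<in> f \<longrightarrow> \<not> \<eta> f then 1 else 0) else (0::real))"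
    by (rule sum.cong) (auto simp: flip_spin_eq_iff[OF assms])
  then show ?thesis
    using assms by (simp add: rate_def flip_spin_neq flip_spin_neq[symmetric])
qed

lemma rate_flip_edge:
  assumes "f \<in> E"
  shows "rate E p (\<eta>, \<sigma>) (flip_edge \<eta> f, \<sigma>) = edge_rate p \<eta> \<sigma> f"
  using assms by (simp add: rate_def edge_rate_def flip_edge_neq flip_edge_neq[symmetric] flip_edge_eq_iff)

lemma rate_eq_0:
  assumes "\<nexists>x. fst b = fst a \<and> snd b = flip_spin (snd a) x"
    and "\<nexists>f. f \<in> E \<and> snd b = snd a \<and> fst b = flip_edge (fst a) f"
  shows "rate E p a b = 0"
  using assms unfolding rate_def by (auto intro!: sum.neutral)

lemma generator_to_edge_flip:
  assumes "e \<in> E" and "fst b = flip_edge \<eta> e"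
  shows "generator E p (\<eta>, \<sigma>) b = (if b = (flip_edge \<eta> e, \<sigma>) then edge_rate p \<eta> \<sigma> e else 0)"
proof -
  have "(\<eta>, \<sigma>) \<noteq> b"
    using assms(2) by (metis flip_edge_neq fst_conv)
  moreover have "rate E p (\<eta>, \<sigma>) b = 0" if "b \<noteq> (flip_edge \<eta> e, \<sigma>)"
    using that assms(2) flip_edge_neq[of \<eta> e] by (intro rate_eq_0) (auto simp: flip_edge_eq_iff prod_eq_iff)
  ultimately show ?thesis
    using assms by (auto simp: generator_def rate_flip_edge)
qed

lemma sum_generator_edge_flip:
  fixes E :: "'v::finite set set"
  assumes "\<eta> \<in> edge_configs E" and "e \<in> E" and "\<sigma> \<in> spin_configs"
  shows "(\<Sum>b\<in>{b\<in>states E. fst b = flip_edge \<eta> e}. generator E p (\<eta>, \<sigma>) b) = edge_rate p \<eta> \<sigma> e"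
proof -
  let ?b = "(flip_edge \<eta> e, \<sigma>)"
  have "?b \<in> states E"
    using assms by (simp add: states_def flip_edge_in_edge_configs)
  have "(\<Sum>b\<in>{b\<in>states E. fst b = flip_edge \<eta> e}. generator E p (\<eta>, \<sigma>) b)
      = (\<Sum>b\<in>{b\<in>states E. fst b = flip_edge \<eta> e}. if b = ?b then edge_rate p \<eta> \<sigma> e else 0)"
    by (rule sum.cong) (simp_all add: generator_to_edge_flip[OF assms(2)])
  also have "\<dots> = edge_rate p \<eta> \<sigma> e"
    using \<open>?b \<in> states E\<close> finite_states[of E] by simp
  finally show ?thesis .
qed

lemma edge_flip_rate:
  fixes E :: "'v::finite set set"
  assumes "\<eta> \<in> edge_configs E" and "e \<in> E" and "\<sigma> \<in> spin_configs"
  shows "((\<lambda>t. (\<Sum>b\<in>{b\<in>states E. fst b = flip_edge \<eta> e}. trans E p t (\<eta>, \<sigma>) b) / t)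
          \<longlongrightarrow> edge_rate p \<eta> \<sigma> e) (at_right 0)"
proof -
  let ?B = "{b\<in>states E. fst b = flip_edge \<eta> e}"
  have "((\<lambda>t. \<Sum>b\<in>?B. trans E p t (\<eta>, \<sigma>) b / t) \<longlongrightarrow> (\<Sum>b\<in>?B. generator E p (\<eta>, \<sigma>) b)) (at_right 0)"
    unfolding trans_eq_mat_exp using assms(1,3) flip_edge_neq[of \<eta> e]
    by (intro tendsto_sum mat_exp_off_diagonal_rate finite_states) (auto simp: states_def)
  then show ?thesis
    using assms by (simp add: sum_divide_distrib sum_generator_edge_flip)
qed

section \<open>Stationarity of IP\<close>

lemma IP_weight_flip_spins:
  assumes "\<forall>f\<in>E. \<eta> f \<longrightarrow> f \<subseteq> C \<or> f \<inter> C = {}"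
  shows "IP_weight E p (\<eta>, flip_spins \<sigma> C) = IP_weight E p (\<eta>, \<sigma>)"
  unfolding IP_weight_def using assms by (auto intro!: prod.cong simp: delta_flip_spins)

lemma IP_weight_edge_balance:
  fixes E :: "'v::finite set set"
  assumes "f \<in> E"
  shows "IP_weight E p (\<eta>, \<sigma>) * edge_rate p \<eta> \<sigma> f
       = IP_weight E p (flip_edge \<eta> f, \<sigma>) * edge_rate p (flip_edge \<eta> f) \<sigma> f"
proof -
  define w where "w \<eta>' e = p * (if \<eta>' e \<and> delta \<sigma> e then 1 else 0) + (1 - p) * (if \<not> \<eta>' e then 1 else 0)"
    for \<eta>' and e :: "'v set"
  have split: "IP_weight E p (\<eta>', \<sigma>) = w \<eta>' f * prod (w \<eta>') (E - {f})" for \<eta>'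
    unfolding IP_weight_def w_def fst_conv snd_conv by (rule prod.remove) (simp_all add: assms)
  have "prod (w (flip_edge \<eta> f)) (E - {f}) = prod (w \<eta>) (E - {f})"
    by (rule prod.cong) (auto simp: w_def flip_edge_def)
  then show ?thesis
    unfolding split by (cases "\<eta> f") (simp_all add: w_def edge_rate_def flip_edge_def algebra_simps)
qed

lemma IP_weight_detailed_balance:
  fixes E :: "'v::finite set set"
  assumes "a \<in> states E" and "b \<in> states E"
  shows "IP_weight E p a * rate E p a b = IP_weight E p b * rate E p b a"
proof -
  obtain \<eta> \<sigma> \<eta>' \<sigma>' where a: "a = (\<eta>, \<sigma>)" and b: "b = (\<eta>', \<sigma>')"
    by fastforce
  have \<sigma>: "\<sigma> \<in> spin_configs" and \<sigma>': "\<sigma>' \<in> spin_configs"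
    using assms by (auto simp: a b states_def)
  consider (spin) x where "\<eta>' = \<eta>" and "\<sigma>' = flip_spin \<sigma> x"
    | (edge) f where "f \<in> E" and "\<sigma>' = \<sigma>" and "\<eta>' = flip_edge \<eta> f"
    | (none) "\<nexists>x. \<eta>' = \<eta> \<and> \<sigma>' = flip_spin \<sigma> x"
        and "\<nexists>f. f \<in> E \<and> \<sigma>' = \<sigma> \<and> \<eta>' = flip_edge \<eta> f"
    by blast
  then show ?thesis
  proof cases
    case spin
    have "IP_weight E p (\<eta>, flip_spin \<sigma> x) = IP_weight E p (\<eta>, \<sigma>)"
      if "\<forall>f\<in>E. x \<in> f \<longrightarrow> \<not> \<eta> f"
      using that IP_weight_flip_spins[of E \<eta> "{x}"] by (auto simp: flip_spin_eq_flip_spins)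
    then show ?thesis
      using rate_flip_spin[OF \<sigma>, of E p \<eta> x] rate_flip_spin[OF \<sigma>', of E p \<eta> x] by (simp add: a b spin)
  next
    case edge
    then show ?thesis
      using IP_weight_edge_balance rate_flip_edge[of f E p "flip_edge \<eta> f" \<sigma>]
      by (simp add: a b rate_flip_edge)
  next
    case none
    then have "\<nexists>x. \<eta> = \<eta>' \<and> \<sigma> = flip_spin \<sigma>' x" and "\<nexists>f. f \<in> E \<and> \<sigma> = \<sigma>' \<and> \<eta> = flip_edge \<eta>' f"
      by (metis flip_spin_flip_spin, metis flip_edge_flip_edge)
    with none show ?thesis
      by (simp add: a b rate_eq_0)
  qed
qed

lemma IP_stationary:
  fixes E :: "'v::finite set set"
  assumes "a \<in> states E"
  shows "(\<Sum>c\<in>states E. IP E p c * trans E p s c a) = IP E p a"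
  unfolding trans_eq_mat_exp
proof (rule mat_exp_stationary[OF finite_states assms])
  fix d assume "d \<in> states E"
  have "IP E p a * rate E p a b = IP E p b * rate E p b a" if "a \<in> states E" "b \<in> states E" for a b
    using IP_weight_detailed_balance[OF that] by (simp add: IP_def)
  then show "(\<Sum>c\<in>states E. IP E p c * generator E p c d) = 0"
    unfolding generator_def by (rule balance_if_detailed_balance[OF finite_states \<open>d \<in> states E\<close>])
qed

lemma sum_states_fiber:
  assumes "\<eta> \<in> edge_configs E"
  shows "(\<Sum>a\<in>{a\<in>states E. fst a = \<eta>}. g a) = (\<Sum>\<sigma>\<in>spin_configs. g (\<eta>, \<sigma>))"
proof -
  have "{a\<in>states E. fst a = \<eta>} = Pair \<eta> ` spin_configs"
    using assms by (auto simp: states_def)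
  then show ?thesis by (simp add: sum.reindex inj_on_def)
qed

lemma edge_prob_eq_sum_IP:
  fixes E :: "'v::finite set set"
  assumes "\<eta> \<in> edge_configs E"
  shows "edge_prob E p s \<eta> = (\<Sum>\<sigma>\<in>spin_configs. IP E p (\<eta>, \<sigma>))"
  unfolding edge_prob_def sum_states_fiber[OF assms]
  using assms by (intro sum.cong refl IP_stationary) (simp add: states_def)

lemma joint_edge_prob_eq_sum_IP:
  fixes E :: "'v::finite set set"
  assumes "\<eta> \<in> edge_configs E"
  shows "joint_edge_prob E p s t \<eta> \<eta>'
       = (\<Sum>\<sigma>\<in>spin_configs. IP E p (\<eta>, \<sigma>) * (\<Sum>b\<in>{b\<in>states E. fst b = \<eta>'}. trans E p t (\<eta>, \<sigma>) b))"
proof -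
  have "(\<Sum>c\<in>states E. IP E p c * trans E p s c (\<eta>, \<sigma>)) = IP E p (\<eta>, \<sigma>)" if "\<sigma> \<in> spin_configs" for \<sigma>
    using assms that by (intro IP_stationary) (simp add: states_def)
  then show ?thesis
    unfolding joint_edge_prob_def sum_states_fiber[OF assms]
    by (intro sum.cong refl) (simp add: sum_distrib_left)
qed

section \<open>Spins conditioned on the edge configuration\<close>

lemma delta_if_open:
  fixes E :: "'v::finite set set"
  assumes "IP_weight E p (\<eta>, \<sigma>) \<noteq> 0" and "f \<in> E" and "\<eta> f"
  shows "delta \<sigma> f"
proof (rule ccontr)
  assume "\<not> delta \<sigma> f"
  with assms(2,3) have "IP_weight E p (\<eta>, \<sigma>) = 0"
    unfolding IP_weight_def by (intro prod_zero) auto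
  with assms(1) show False by simp
qed

lemma delta_if_gamma:
  fixes E :: "'v::finite set set"
  assumes "gamma E \<eta> e" and "IP_weight E p (\<eta>, \<sigma>) \<noteq> 0"
  shows "delta \<sigma> e"
proof -
  obtain x y where e: "e = {x, y}" and path: "(open_step E \<eta> e)\<^sup>*\<^sup>* x y"
    using assms(1) unfolding gamma_def by blast
  have "\<sigma> x = \<sigma> v" if "(open_step E \<eta> e)\<^sup>*\<^sup>* x v" for v
    using that
  proof (induction rule: rtranclp_induct)
    case (step u w)
    then have "delta \<sigma> {u, w}"
      using delta_if_open[OF assms(2)] unfolding open_step_def by blast
    with step.IH show ?case
      by (simp add: delta_pair)
  qed simp
  from this[OF path] show ?thesis
    unfolding e delta_pair .
qed

lemma sum_IP_weight_delta_if_not_gamma: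
  fixes E :: "'v::finite set set"
  assumes "simple_graph E" and "e \<in> E" and "\<not> \<eta> e" and "\<not> gamma E \<eta> e"
  shows "(\<Sum>\<sigma>\<in>spin_configs. IP_weight E p (\<eta>, \<sigma>) * (if delta \<sigma> e then 1 else 0))
       = (\<Sum>\<sigma>\<in>spin_configs. IP_weight E p (\<eta>, \<sigma>)) / 2"
proof -
  obtain x y where e: "e = {x, y}" and "x \<noteq> y"
    using assms(1,2) unfolding simple_graph_def by blast
  define C where "C = {v. (open_step E \<eta> e)\<^sup>*\<^sup>* x v}"
  have "x \<in> C" and "y \<notin> C"
    using assms(4) \<open>x \<noteq> y\<close> by (auto simp: C_def gamma_def e)
  have closed: "\<forall>f\<in>E. \<eta> f \<longrightarrow> f \<subseteq> C \<or> f \<inter> C = {}"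
  proof (intro ballI impI)
    fix f assume "f \<in> E" and "\<eta> f"
    then obtain u w where f: "f = {u, w}"
      using assms(1) unfolding simple_graph_def by blast
    have "open_step E \<eta> e u w" and "open_step E \<eta> e w u"
      using \<open>f \<in> E\<close> \<open>\<eta> f\<close> assms(3) unfolding open_step_def f by (auto simp: insert_commute)
    then have "u \<in> C \<longleftrightarrow> w \<in> C"
      unfolding C_def by (meson mem_Collect_eq rtranclp.rtrancl_into_rtrancl)
    then show "f \<subseteq> C \<or> f \<inter> C = {}"
      unfolding f by auto
  qed
  let ?W = "\<lambda>\<sigma>. IP_weight E p (\<eta>, \<sigma>)"
  have "(\<Sum>\<sigma>\<in>spin_configs. ?W \<sigma> * (if delta \<sigma> e then 1 else 0))
      = (\<Sum>\<sigma>\<in>spin_configs. ?W \<sigma> * (if delta \<sigma> e then 0 else 1))"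
    by (rule sum.reindex_bij_witness[of _ "\<lambda>\<sigma>. flip_spins \<sigma> C" "\<lambda>\<sigma>. flip_spins \<sigma> C"])
      (simp_all add: flip_spins_in_spin_configs IP_weight_flip_spins[OF closed] e
        delta_flip_spins_across[OF _ \<open>x \<in> C\<close> \<open>y \<notin> C\<close>])
  moreover have "(\<Sum>\<sigma>\<in>spin_configs. ?W \<sigma> * (if delta \<sigma> e then 1 else 0))
      + (\<Sum>\<sigma>\<in>spin_configs. ?W \<sigma> * (if delta \<sigma> e then 0 else 1)) = (\<Sum>\<sigma>\<in>spin_configs. ?W \<sigma>)"
    by (simp add: sum.distrib[symmetric] if_distrib cong: if_cong)
  ultimately show ?thesis
    by simp
qed

lemma conditional_edge_rate:
  fixes E :: "'v::finite set set"
  assumes "simple_graph E" and "e \<in> E" and "(\<Sum>\<sigma>\<in>spin_configs. IP E p (\<eta>, \<sigma>)) \<noteq> 0"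
  shows "(\<Sum>\<sigma>\<in>spin_configs. IP E p (\<eta>, \<sigma>) * edge_rate p \<eta> \<sigma> e) / (\<Sum>\<sigma>\<in>spin_configs. IP E p (\<eta>, \<sigma>))
       = (1 - p) * (if \<eta> e then 1 else 0)
         + p * (if \<not> \<eta> e \<and> gamma E \<eta> e then 1 else 0)
         + p / 2 * (if \<not> \<eta> e \<and> \<not> gamma E \<eta> e then 1 else 0)"
proof -
  define Z where "Z = (\<Sum>c\<in>states E. IP_weight E p c)"
  define W where "W = (\<Sum>\<sigma>\<in>spin_configs. IP_weight E p (\<eta>, \<sigma>))"
  have IP_sum: "(\<Sum>\<sigma>\<in>spin_configs. IP E p (\<eta>, \<sigma>) * g \<sigma>) = (\<Sum>\<sigma>\<in>spin_configs. IP_weight E p (\<eta>, \<sigma>) * g \<sigma>) / Z"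
    for g by (simp add: IP_def Z_def sum_divide_distrib)
  have "Z \<noteq> 0" and "W \<noteq> 0"
    using assms(3) IP_sum[of "\<lambda>_. 1"] by (auto simp: W_def)
  show ?thesis
  proof (cases "\<eta> e")
    case True
    then show ?thesis
      using IP_sum[of "\<lambda>_. 1 - p"] IP_sum[of "\<lambda>_. 1"] \<open>Z \<noteq> 0\<close> \<open>W \<noteq> 0\<close>
      by (simp add: edge_rate_def W_def sum_distrib_right[symmetric])
  next
    case False
    have "(\<Sum>\<sigma>\<in>spin_configs. IP_weight E p (\<eta>, \<sigma>) * (if delta \<sigma> e then 1 else 0))
        = (if gamma E \<eta> e then W else W / 2)"
      using sum_IP_weight_delta_if_not_gamma[of E e \<eta> p] assms(1,2) False
      by (auto simp: W_def intro!: sum.cong) (meson delta_if_gamma)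
    then show ?thesis
      using False IP_sum[of "\<lambda>\<sigma>. p * (if delta \<sigma> e then 1 else 0)"] IP_sum[of "\<lambda>_. 1"] \<open>Z \<noteq> 0\<close> \<open>W \<noteq> 0\<close>
      by (simp add: edge_rate_def W_def sum_distrib_left[symmetric] mult.left_commute)
  qed
qed

theorem proposition3:
  fixes E :: "'v::finite set set" and p s :: real and e :: "'v set" and \<eta> :: "'v set \<Rightarrow> bool"
  assumes "simple_graph E"
    and "0 \<le> p" and "p \<le> 1"
    and "e \<in> E"
    and "\<eta> \<in> edge_configs E"
    and "0 \<le> s"
    and "edge_prob E p s \<eta> > 0"
  shows "((\<lambda>t. joint_edge_prob E p s t \<eta> (flip_edge \<eta> e) / edge_prob E p s \<eta> / t)
          \<longlongrightarrow> (1 - p) * (if \<eta> e then 1 else 0)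
             + p * (if \<not> \<eta> e \<and> gamma E \<eta> e then 1 else 0)
             + p / 2 * (if \<not> \<eta> e \<and> \<not> gamma E \<eta> e then 1 else 0)) (at_right 0)"
proof -
  let ?P = "edge_prob E p s \<eta>"
  let ?B = "{b\<in>states E. fst b = flip_edge \<eta> e}"
  have P: "?P = (\<Sum>\<sigma>\<in>spin_configs. IP E p (\<eta>, \<sigma>))"
    by (rule edge_prob_eq_sum_IP[OF assms(5)])
  have lim: "((\<lambda>t. (\<Sum>\<sigma>\<in>spin_configs. IP E p (\<eta>, \<sigma>) * ((\<Sum>b\<in>?B. trans E p t (\<eta>, \<sigma>) b) / t)) / ?P)
        \<longlongrightarrow> (\<Sum>\<sigma>\<in>spin_configs. IP E p (\<eta>, \<sigma>) * edge_rate p \<eta> \<sigma> e) / ?P) (at_right 0)"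
    using assms(4,5,7) by (intro tendsto_intros edge_flip_rate) auto
  have quotient_eq: "(\<lambda>t. (\<Sum>\<sigma>\<in>spin_configs. IP E p (\<eta>, \<sigma>) * ((\<Sum>b\<in>?B. trans E p t (\<eta>, \<sigma>) b) / t)) / ?P)
      = (\<lambda>t. joint_edge_prob E p s t \<eta> (flip_edge \<eta> e) / ?P / t)"
    by (simp add: fun_eq_iff joint_edge_prob_eq_sum_IP[OF assms(5)] sum_divide_distrib[symmetric])
  have limit_eq: "(\<Sum>\<sigma>\<in>spin_configs. IP E p (\<eta>, \<sigma>) * edge_rate p \<eta> \<sigma> e) / ?P
      = (1 - p) * (if \<eta> e then 1 else 0)
             + p * (if \<not> \<eta> e \<and> gamma E \<eta> e then 1 else 0)
             + p / 2 * (if \<not> \<eta> e \<and> \<not> gamma E \<eta> e then 1 else 0)"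
    unfolding P using assms(7) P by (intro conditional_edge_rate[OF assms(1,4)]) simp
  show ?thesis
    using lim unfolding quotient_eq limit_eq .
qed

end
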